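(* Let $\mathfrak g=\mathfrak{hsp}_{2n}(\mathbb R)=\mathfrak g(\mathfrak{sp}_{2n}(\mathbb R),\mathbb R^{2n},\mathbb R,\omega)$ and let $x\in\mathfrak g$ be such that $C_x$ is pointed. Then $x$ is contained in a pointed generating $\operatorname{Inn}(\mathfrak g)$-invariant closed convex cone $W\subseteq\mathfrak g$.
   Context: $\omega$ is the standard symplectic form on $\mathbb R^{2n}$; $\mathfrak g(\mathfrak l,V,\mathfrak z,\beta)=\mathfrak z\oplus V\oplus\mathfrak l$ with bracket $[(z,v,x),(z',v',x')]=(\beta(v,v'),x.v'-x'.v,[x,x'])$, here with $\mathfrak l=\mathfrak{sp}_{2n}(\mathbb R)$ acting naturally on $V=\mathbb R^{2n}$, $\mathfrak z=\mathbb R$, $\beta=\omega$ (the Jacobi Lie algebra). $\operatorname{Inn}(\mathfrak g)=\langle e^{\operatorname{ad}\mathfrak g}\rangle$; $C_x$ is the closed convex cone generated by $\operatorname{Inn}(\mathfrak g)x$; pointed = contains no affine line; generating = spans $\mathfrak g$. *)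

theory Defs
  imports "HOL-Analysis.Analysis"
begin

text \<open>V = R^{2n} modelled as real^('n + 'n) (coordinates q_1..q_n, p_1..p_n);
  the Jacobi algebra hsp_{2n}(R) = R (+) V (+) sp_{2n}(R) is realised inside the
  Euclidean space real \<times> V \<times> (2n\<times>2n matrices).\<close>

type_synonym 'n vec2 = "real ^ ('n + 'n)"
type_synonym 'n mat2 = "real ^ ('n + 'n) ^ ('n + 'n)"
type_synonym 'n jac = "real \<times> 'n vec2 \<times> 'n mat2"

definition symJ :: "('n::finite) mat2" where
  "symJ = (\<chi> i j. (case (i, j) of
      (Inl a, Inr b) \<Rightarrow> (if a = b then 1 else 0)
    | (Inr a, Inl b) \<Rightarrow> (if a = b then -1 else 0)
    | _ \<Rightarrow> 0))"

definition omega :: "('n::finite) vec2 \<Rightarrow> 'n vec2 \<Rightarrow> real" where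
  "omega v w = v \<bullet> (symJ *v w)"

definition sp :: "('n::finite) mat2 set" where
  "sp = {X. transpose X ** symJ + symJ ** X = 0}"

definition hsp :: "('n::finite) jac set" where
  "hsp = {(z, v, X). X \<in> sp}"

definition br :: "('n::finite) jac \<Rightarrow> 'n jac \<Rightarrow> 'n jac" where
  "br a b = (case a of (z, v, X) \<Rightarrow> case b of (z', v', X') \<Rightarrow>
     (omega v v', X *v v' - X' *v v, X ** X' - X' ** X))"

definition expad :: "('n::finite) jac \<Rightarrow> 'n jac \<Rightarrow> 'n jac" where
  "expad y u = (\<Sum>k. (inverse (fact k) :: real) *\<^sub>R ((br y ^^ k) u))"

text \<open>Inn(g): the group generated by the e^{ad y}, y in g (closed under inverses
  since e^{ad y}^{-1} = e^{ad(-y)}, so the generated monoid is the generated group)\<close>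
inductive_set Inn :: "(('n::finite) jac \<Rightarrow> 'n jac) set" where
  Inn_id: "id \<in> Inn"
| Inn_step: "y \<in> hsp \<Longrightarrow> \<phi> \<in> Inn \<Longrightarrow> (\<lambda>u. expad y (\<phi> u)) \<in> Inn"

definition Cx :: "('n::finite) jac \<Rightarrow> 'n jac set" where
  "Cx x = closure (convex_cone hull ((\<lambda>\<phi>. \<phi> x) ` Inn))"

definition pointed :: "'a::real_vector set \<Rightarrow> bool" where
  "pointed C \<longleftrightarrow> \<not> (\<exists>a d. d \<noteq> 0 \<and> (\<forall>t::real. a + t *\<^sub>R d \<in> C))"

end

theory Submission
  imports Defs
begin

(* Identify hsp with the Poisson algebra of polynomials of degree at most two on V, so that
   u = (z, v, X) becomes H_u(x) = z + omega(v, x) + Q_X(x); every inner automorphism then acts by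
   an affine substitution of the variable. Hence for s = 1 or s = -1 the cone W_s of all u with
   s * H_u >= 0 is closed, pointed, generating and invariant, and so is (except for being
   generating) the cone P_s of all u with s * Q_X >= 0.
   If Q_x is not zero, averaging the translates of x shows that C_x contains sgn (Q_x b) times the
   central unit for every b; as C_x is pointed, Q_x has a constant sign s, so C_x lies in P_s.
   An element of P_s lying in -W_s is central, hence C_x meets -W_s only in 0, which makes
   C_x + W_s closed and pointed. If Q_x = 0, pointedness forces x to be central, and x lies in W_s
   for the sign s of its central component. *)

section \<open>Symplectic linear algebra\<close>

lemma symJ_apply_Inl: "(symJ *v w) $ Inl a = w $ Inr a"
proof -
  have "(symJ *v w) $ Inl a = (\<Sum>j\<in>UNIV. (if j = Inr a then w $ j else 0))"
    unfolding matrix_vector_mult_def symJ_def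
    by (simp only: vec_lambda_beta, rule sum.cong) (auto split: sum.splits)
  also have "\<dots> = w $ Inr a" by (simp add: sum.delta')
  finally show ?thesis .
qed

lemma symJ_apply_Inr: "(symJ *v w) $ Inr a = - w $ Inl a"
proof -
  have "(symJ *v w) $ Inr a = (\<Sum>j\<in>UNIV. (if j = Inl a then - w $ j else 0))"
    unfolding matrix_vector_mult_def symJ_def
    by (simp only: vec_lambda_beta, rule sum.cong) (auto split: sum.splits)
  also have "\<dots> = - w $ Inl a" by (simp add: sum.delta')
  finally show ?thesis .
qed

lemma symJ_symJ: "symJ *v (symJ *v w) = - (w :: ('n::finite) vec2)"
  unfolding vec_eq_iff
proof
  fix i show "(symJ *v (symJ *v w)) $ i = (- w) $ i"
    by (cases i) (simp_all add: symJ_apply_Inl symJ_apply_Inr)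
qed

lemma inner_vec_Plus:
  "(v :: ('n::finite) vec2) \<bullet> w = (\<Sum>a\<in>UNIV. v $ Inl a * w $ Inl a) + (\<Sum>a\<in>UNIV. v $ Inr a * w $ Inr a)"
proof -
  have "v \<bullet> w = (\<Sum>i\<in>UNIV. v $ i * w $ i)" by (simp add: inner_vec_def)
  also have "\<dots> = (\<Sum>i\<in>Inl ` UNIV \<union> Inr ` UNIV. v $ i * w $ i)"
    by (metis UNIV_Plus_UNIV Plus_def)
  also have "\<dots> = (\<Sum>i\<in>Inl ` (UNIV::'n set). v $ i * w $ i) + (\<Sum>i\<in>Inr ` (UNIV::'n set). v $ i * w $ i)"
    by (rule sum.union_disjoint) auto
  also have "\<dots> = (\<Sum>a\<in>UNIV. v $ Inl a * w $ Inl a) + (\<Sum>a\<in>UNIV. v $ Inr a * w $ Inr a)"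
    by (simp add: sum.reindex)
  finally show ?thesis .
qed

lemma inner_symJ_skew: "v \<bullet> (symJ *v w) = - ((symJ *v v) \<bullet> (w :: ('n::finite) vec2))"
  by (simp add: inner_vec_Plus symJ_apply_Inl symJ_apply_Inr sum_negf[symmetric] mult.commute)

lemma omega_skew: "omega v w = - omega w v"
  unfolding omega_def by (metis inner_symJ_skew inner_commute)

lemma omega_symJ_self: "omega v (symJ *v v) = - (v \<bullet> v)"
  by (simp add: omega_def symJ_symJ)

lemma symJ_transpose: "transpose symJ = - symJ"
  by (auto simp: vec_eq_iff transpose_def symJ_def split: sum.splits)

lemma matrix_vector_mult_uminus_right: "(A::real^'m::finite^'k::finite) *v (- x) = - (A *v x)"
  by (metis add_eq_0_iff matrix_vector_right_distrib matrix_vector_mult_0_right)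

lemma matrix_vector_mult_uminus_left: "(- (A::real^'m::finite^'k::finite)) *v x = - (A *v x)"
  by (simp add: vec_eq_iff matrix_vector_mult_def sum_negf)

lemma matrix_add_rdistrib: "((A::real^'m::finite^'k::finite) + B) ** (C::real^'p::finite^'m) = A ** C + B ** C"
  by (rule matrix_eq[THEN iffD2]) (simp add: matrix_vector_mul_assoc[symmetric] matrix_vector_mult_add_rdistrib)

lemma transpose_add: "transpose (A + B) = transpose A + transpose B"
  by (simp add: transpose_def vec_eq_iff)

lemma transpose_diff: "transpose (A - B) = transpose A - transpose B"
  by (simp add: transpose_def vec_eq_iff)

lemma sp_iff: "X \<in> sp \<longleftrightarrow> (\<forall>w. transpose X *v (symJ *v w) = - (symJ *v (X *v w)))"
proof -
  have "X \<in> sp \<longleftrightarrow> (\<forall>w. (transpose X ** symJ + symJ ** X) *v w = 0 *v w)"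
    unfolding sp_def using matrix_eq[of _ 0] by simp
  also have "\<dots> \<longleftrightarrow> (\<forall>w. transpose X *v (symJ *v w) = - (symJ *v (X *v w)))"
    by (simp add: matrix_vector_mult_add_rdistrib matrix_vector_mul_assoc eq_neg_iff_add_eq_0)
  finally show ?thesis .
qed

lemma symJ_in_sp: "symJ \<in> sp"
  unfolding sp_iff
  by (simp del: transpose_matrix_vector add: symJ_transpose symJ_symJ matrix_vector_mult_uminus_left)

lemma omega_sp_left:
  assumes "X \<in> sp" shows "omega (X *v p) q = - omega p (X *v q)"
proof -
  have "omega (X *v p) q = p \<bullet> (transpose X *v (symJ *v q))"
    unfolding omega_def by (metis dot_lmul_matrix inner_commute transpose_matrix_vector)
  also have "\<dots> = - omega p (X *v q)" using assms by (simp add: sp_iff omega_def)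
  finally show ?thesis .
qed

lemma omega_sp_sym: "X \<in> sp \<Longrightarrow> omega p (X *v q) = omega q (X *v p)"
  using omega_skew[of p "X *v q"] omega_sp_left[of X q p] by simp

lemma subspace_sp: "subspace sp"
proof -
  have "linear (\<lambda>X::'n::finite mat2. transpose X ** symJ + symJ ** X)"
    by (rule linearI) (simp_all add: transpose_add matrix_add_rdistrib matrix_add_ldistrib
        transpose_scalar scalar_matrix_assoc matrix_scalar_ac scaleR_add_right)
  then show ?thesis
    unfolding sp_def by (rule linear_subspace_kernel)
qed

lemma subspace_hsp: "subspace (hsp :: ('n::finite) jac set)"
  using subspace_sp unfolding subspace_def hsp_def by (auto simp: zero_prod_def)

lemma convex_cone_hsp: "convex_cone hsp"
  unfolding convex_cone_iff
  using subspace_0[OF subspace_hsp] subspace_add[OF subspace_hsp] subspace_scale[OF subspace_hsp] by blast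

lemma commutator_in_sp:
  assumes X: "X \<in> sp" and Y: "Y \<in> sp"
  shows "Y ** X - X ** Y \<in> sp"
proof -
  have XX: "transpose X *v (symJ *v w) = - (symJ *v (X *v w))" for w using X sp_iff by blast
  have YY: "transpose Y *v (symJ *v w) = - (symJ *v (Y *v w))" for w using Y sp_iff by blast
  show ?thesis
    unfolding sp_iff
    by (simp del: transpose_matrix_vector add: transpose_diff matrix_transpose_mul
        matrix_vector_mult_diff_rdistrib matrix_vector_mul_assoc[symmetric] XX YY
        matrix_vector_mult_uminus_right matrix_vector_mult_diff_distrib)
qed

lemma br_simp: "br (c, a, Y) (z, v, X) = (omega a v, Y *v v - X *v a, Y ** X - X ** Y)"
  by (simp add: br_def)

lemma br_in_hsp: "y \<in> hsp \<Longrightarrow> u \<in> hsp \<Longrightarrow> br y u \<in> hsp"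
  by (cases y, cases u) (auto simp: br_simp hsp_def commutator_in_sp)

lemma linear_br: "linear (br (y::'n::finite jac))"
proof (rule linearI)
  fix u w :: "'n jac"
  show "br y (u + w) = br y u + br y w"
    by (cases y, cases u, cases w) (simp add: br_simp omega_def inner_add_right
        matrix_vector_right_distrib matrix_vector_mult_add_rdistrib matrix_add_ldistrib matrix_add_rdistrib)
next
  fix k :: real and u :: "'n jac"
  show "br y (k *\<^sub>R u) = k *\<^sub>R br y u"
    by (cases y, cases u) (simp add: br_simp omega_def matrix_vector_mult_scaleR scaleR_matrix_vector_assoc[symmetric]
        scalar_matrix_assoc[symmetric] matrix_scalar_ac scaleR_right_diff_distrib)
qed

section \<open>Exponentials of linear operators\<close>

definition op_exp :: "('a::euclidean_space \<Rightarrow> 'a) \<Rightarrow> 'a \<Rightarrow> 'a" where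
  "op_exp f u = (\<Sum>k. (inverse (fact k) :: real) *\<^sub>R (f ^^ k) u)"

lemma expad_eq_op_exp: "expad y = op_exp (br y)"
  unfolding expad_def op_exp_def ..

lemma linear_funpow: "linear (f::'a::real_vector \<Rightarrow> 'a) \<Longrightarrow> linear (f ^^ k)"
proof (induction k)
  case 0 then show ?case by (simp add: linear_id id_def module_hom_ident)
next
  case (Suc k) then show ?case using linear_compose[of "f ^^ k" f] by (simp add: o_def)
qed

lemma norm_funpow_le:
  fixes f :: "'a::real_normed_vector \<Rightarrow> 'a"
  assumes "\<And>x. norm (f x) \<le> norm x * K" "0 \<le> K"
  shows "norm ((f ^^ k) u) \<le> norm u * K ^ k"
proof (induction k)
  case 0 then show ?case by simp
next
  case (Suc k)
  have "norm ((f ^^ Suc k) u) \<le> norm ((f ^^ k) u) * K" using assms(1) by simp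
  also have "\<dots> \<le> norm u * K ^ k * K" using Suc assms(2) by (simp add: mult_right_mono)
  finally show ?case by (simp add: ac_simps)
qed

lemma summable_norm_op_exp_series:
  fixes f :: "'a::euclidean_space \<Rightarrow> 'a"
  assumes "linear f"
  shows "summable (\<lambda>k. norm ((inverse (fact k) :: real) *\<^sub>R (f ^^ k) u))"
proof -
  obtain K where K: "\<And>x. norm (f x) \<le> norm x * K" "0 < K"
    using assms linear_conv_bounded_linear bounded_linear.pos_bounded by blast
  have "norm (inverse (fact k) *\<^sub>R (f ^^ k) u) \<le> norm u * (inverse (fact k) * K ^ k)" for k
    using mult_left_mono[OF norm_funpow_le[OF K(1) less_imp_le[OF K(2)]], of "inverse (fact k)" k u]
    by (simp add: ac_simps)
  then show ?thesis
    by (intro summable_comparison_test[OF _ summable_mult[OF summable_exp]]) auto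
qed

lemma summable_op_exp_series:
  "linear (f::'a::euclidean_space \<Rightarrow> 'a) \<Longrightarrow> summable (\<lambda>k. (inverse (fact k) :: real) *\<^sub>R (f ^^ k) u)"
  by (rule summable_norm_cancel[OF summable_norm_op_exp_series])

lemma bounded_linear_op_exp:
  fixes f :: "'a::euclidean_space \<Rightarrow> 'a" and g :: "'a \<Rightarrow> 'b::real_normed_vector"
  assumes "linear f" "bounded_linear g"
  shows "g (op_exp f u) = (\<Sum>k. (inverse (fact k) :: real) *\<^sub>R g ((f ^^ k) u))"
  unfolding op_exp_def bounded_linear.suminf[OF assms(2) summable_op_exp_series[OF assms(1)]]
  by (simp add: linear_scale[OF bounded_linear.linear[OF assms(2)]])

lemma linear_op_exp:
  fixes f :: "'a::euclidean_space \<Rightarrow> 'a"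
  assumes "linear f" shows "linear (op_exp f)"
proof (rule linearI)
  note l = linear_funpow[OF assms] and s = summable_op_exp_series[OF assms]
  fix u v
  have "op_exp f u + op_exp f v
      = (\<Sum>k. (inverse (fact k) :: real) *\<^sub>R (f ^^ k) u + (inverse (fact k) :: real) *\<^sub>R (f ^^ k) v)"
    unfolding op_exp_def by (rule suminf_add[OF s s])
  also have "\<dots> = op_exp f (u + v)"
    unfolding op_exp_def by (simp add: linear_add[OF l] scaleR_add_right)
  finally show "op_exp f (u + v) = op_exp f u + op_exp f v" by simp
next
  note l = linear_funpow[OF assms] and s = summable_op_exp_series[OF assms]
  fix c :: real and u
  have "c *\<^sub>R op_exp f u = (\<Sum>k. c *\<^sub>R ((inverse (fact k) :: real) *\<^sub>R (f ^^ k) u))"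
    unfolding op_exp_def by (rule suminf_scaleR_right[OF s])
  also have "\<dots> = op_exp f (c *\<^sub>R u)"
    unfolding op_exp_def by (simp add: linear_scale[OF l] mult.commute)
  finally show "op_exp f (c *\<^sub>R u) = c *\<^sub>R op_exp f u" by simp
qed

lemma op_exp_in_subspace:
  fixes f :: "'a::euclidean_space \<Rightarrow> 'a"
  assumes "linear f" "subspace S" "\<And>x. x \<in> S \<Longrightarrow> f x \<in> S" "u \<in> S"
  shows "op_exp f u \<in> S"
proof (rule closed_sequential_limits[THEN iffD1, OF closed_subspace[OF assms(2)], rule_format, OF conjI])
  have "(f ^^ k) u \<in> S" for k by (induction k) (use assms in auto)
  then show "\<forall>n. (\<Sum>k<n. (inverse (fact k) :: real) *\<^sub>R (f ^^ k) u) \<in> S"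
    by (auto intro: subspace_sum[OF assms(2)] subspace_scale[OF assms(2)])
  show "(\<lambda>n. \<Sum>k<n. (inverse (fact k) :: real) *\<^sub>R (f ^^ k) u) \<longlonglongrightarrow> op_exp f u"
    unfolding op_exp_def by (rule summable_LIMSEQ[OF summable_op_exp_series[OF assms(1)]])
qed

lemma op_exp_nilpotent_3:
  fixes f :: "'a::euclidean_space \<Rightarrow> 'a"
  assumes "linear f" "f (f (f u)) = 0"
  shows "op_exp f u = u + f u + (1/2) *\<^sub>R f (f u)"
proof -
  have "(f ^^ k) u = 0" if "k \<notin> {0, 1, 2}" for k
  proof -
    have "(f ^^ k) u = (f ^^ (k - 3)) ((f ^^ 3) u)"
      using that by (simp flip: funpow_add[unfolded o_def, THEN fun_cong] add: funpow_add)
    also have "\<dots> = 0"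
      using assms linear_0[OF linear_funpow[OF assms(1)]] by (simp add: numeral_3_eq_3)
    finally show ?thesis .
  qed
  then have "op_exp f u = (\<Sum>k\<in>{0, 1, 2}. (inverse (fact k) :: real) *\<^sub>R (f ^^ k) u)"
    unfolding op_exp_def by (intro suminf_finite) auto
  then show ?thesis by (simp add: numeral_2_eq_2)
qed

lemma bilinear_basis_expansion:
  fixes B :: "'e::euclidean_space \<Rightarrow> 'e \<Rightarrow> real"
  assumes l1: "\<And>q. linear (\<lambda>p. B p q)" and l2: "\<And>p. linear (B p)"
  shows "B p q = (\<Sum>i\<in>Basis. \<Sum>j\<in>Basis. (p \<bullet> i) * (q \<bullet> j) * B i j)"
proof -
  have "B p q = (\<Sum>i\<in>Basis. (p \<bullet> i) * B i q)"
    by (subst euclidean_representation[of p, symmetric]) (simp add: linear_sum[OF l1] linear_scale[OF l1])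
  also have "\<dots> = (\<Sum>i\<in>Basis. \<Sum>j\<in>Basis. (p \<bullet> i) * (q \<bullet> j) * B i j)"
    by (subst euclidean_representation[of q, symmetric])
      (simp add: linear_sum[OF l2] linear_scale[OF l2] sum_distrib_left mult.assoc)
  finally show ?thesis .
qed

lemma bilinear_Cauchy_product_sums:
  fixes B :: "'e::euclidean_space \<Rightarrow> 'e \<Rightarrow> real" and a b :: "nat \<Rightarrow> 'e"
  assumes l1: "\<And>q. linear (\<lambda>p. B p q)" and l2: "\<And>p. linear (B p)"
    and sa: "summable (\<lambda>k. norm (a k))" and sb: "summable (\<lambda>k. norm (b k))"
  shows "(\<lambda>k. \<Sum>r\<le>k. B (a r) (b (k - r))) sums B (suminf a) (suminf b)"
proof -
  have coord: "summable (\<lambda>k. norm (c k \<bullet> i))" "suminf c \<bullet> i = (\<Sum>k. c k \<bullet> i)"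
    if "summable (\<lambda>k. norm (c k))" "i \<in> Basis" for c :: "nat \<Rightarrow> 'e" and i
  proof -
    show "summable (\<lambda>k. norm (c k \<bullet> i))"
      by (rule summable_comparison_test[OF _ that(1)]) (use that(2) in \<open>auto simp: Basis_le_norm\<close>)
    show "suminf c \<bullet> i = (\<Sum>k. c k \<bullet> i)"
      by (rule bounded_linear.suminf[OF bounded_linear_inner_left summable_norm_cancel[OF that(1)]])
  qed
  have "(\<lambda>k. \<Sum>r\<le>k. (a r \<bullet> i) * (b (k - r) \<bullet> j)) sums ((suminf a \<bullet> i) * (suminf b \<bullet> j))"
    if "i \<in> Basis" "j \<in> Basis" for i j
    unfolding coord(2)[OF sa that(1)] coord(2)[OF sb that(2)]
    by (rule Cauchy_product_sums[OF coord(1)[OF sa that(1)] coord(1)[OF sb that(2)]])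
  then have "(\<lambda>k. \<Sum>i\<in>Basis. \<Sum>j\<in>Basis. B i j * (\<Sum>r\<le>k. (a r \<bullet> i) * (b (k - r) \<bullet> j)))
      sums (\<Sum>i\<in>Basis. \<Sum>j\<in>Basis. B i j * ((suminf a \<bullet> i) * (suminf b \<bullet> j)))"
    by (intro sums_sum sums_mult)
  moreover have "(\<Sum>i\<in>Basis. \<Sum>j\<in>Basis. B i j * (\<Sum>r\<le>k. (a r \<bullet> i) * (b (k - r) \<bullet> j)))
      = (\<Sum>r\<le>k. B (a r) (b (k - r)))" for k
    by (subst bilinear_basis_expansion[OF l1 l2])
      (simp add: sum_distrib_left sum.swap[of _ "{..k}"] ac_simps)
  moreover have "(\<Sum>i\<in>Basis. \<Sum>j\<in>Basis. B i j * ((suminf a \<bullet> i) * (suminf b \<bullet> j))) = B (suminf a) (suminf b)"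
    by (subst bilinear_basis_expansion[OF l1 l2, of "suminf a" "suminf b"]) (simp add: mult.commute)
  ultimately show ?thesis by simp
qed

lemma sum_binomial_Pascal:
  fixes F :: "nat \<Rightarrow> nat \<Rightarrow> real"
  shows "(\<Sum>r\<le>k. real (k choose r) * F (Suc r) (k - r)) + (\<Sum>r\<le>k. real (k choose r) * F r (Suc k - r))
       = (\<Sum>r\<le>Suc k. real (Suc k choose r) * F r (Suc k - r))"
proof -
  have A: "(\<Sum>r\<le>Suc k. real (Suc k choose r) * F r (Suc k - r))
     = F 0 (Suc k) + (\<Sum>r\<le>k. real (k choose r) * F (Suc r) (k - r))
       + (\<Sum>r\<le>k. real (k choose Suc r) * F (Suc r) (k - r))"
    by (subst sum.atMost_Suc_shift) (simp add: ring_distribs sum.distrib)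
  have "(\<Sum>r\<le>k. real (k choose r) * F r (Suc k - r)) = (\<Sum>r\<le>Suc k. real (k choose r) * F r (Suc k - r))"
    by simp
  also have "\<dots> = F 0 (Suc k) + (\<Sum>r\<le>k. real (k choose Suc r) * F (Suc r) (k - r))"
    by (subst sum.atMost_Suc_shift) simp
  finally show ?thesis using A by simp
qed

section \<open>Elements of hsp as inhomogeneous quadratic functions\<close>

text \<open>Under the identification of hsp with the Poisson algebra of polynomials of degree
  at most two on V, u = (z, v, X) is the function x \<mapsto> z + \<omega>(v, x) - \<omega>(x, X x)/2.
  qform u is the polar form of its homogenisation on \<real> \<times> V, and act y is the linear
  vector field on \<real> \<times> V through which the bracket with y acts on these forms.\<close>

definition qform :: "('n::finite) jac \<Rightarrow> real \<times> 'n vec2 \<Rightarrow> real \<times> 'n vec2 \<Rightarrow> real" where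
  "qform u p q = fst p * fst q * fst u
     + (fst p * omega (fst (snd u)) (snd q) + fst q * omega (fst (snd u)) (snd p)) / 2
     - omega (snd p) (snd (snd u) *v snd q) / 2"

definition act :: "('n::finite) jac \<Rightarrow> real \<times> 'n vec2 \<Rightarrow> real \<times> 'n vec2" where
  "act y p = (0, - (snd (snd y) *v snd p + fst p *\<^sub>R fst (snd y)))"

lemma linear_qform_elem: "linear (\<lambda>u::'n::finite jac. qform u p q)"
  by (rule linearI) (simp_all add: qform_def omega_def inner_add_left inner_add_right
      matrix_vector_mult_add_rdistrib matrix_vector_right_distrib scaleR_matrix_vector_assoc[symmetric]
      matrix_vector_mult_scaleR field_simps)

lemma linear_qform_left: "linear (\<lambda>p. qform (u::'n::finite jac) p q)"
  by (rule linearI) (simp_all add: qform_def omega_def inner_add_left inner_add_right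
      matrix_vector_right_distrib matrix_vector_mult_scaleR field_simps)

lemma linear_qform_right: "linear (qform (u::'n::finite jac) p)"
  by (rule linearI) (simp_all add: qform_def omega_def inner_add_left inner_add_right
      matrix_vector_right_distrib matrix_vector_mult_scaleR field_simps)

lemma qform_scaleR: "qform u (c *\<^sub>R p) (d *\<^sub>R q) = c * d * qform u p q"
  by (simp add: linear_scale[OF linear_qform_left] linear_scale[OF linear_qform_right])

lemma linear_act: "linear (act (y::'n::finite jac))"
  by (rule linearI) (simp_all add: act_def matrix_vector_right_distrib matrix_vector_mult_scaleR
      scaleR_add_left scaleR_add_right scaleR_diff_right)

lemma qform_br:
  assumes "y \<in> hsp" "u \<in> hsp"
  shows "qform (br y u) p q = qform u (act y p) q + qform u p (act y q)"
proof -
  obtain c a Y where y: "y = (c, a, Y)" by (metis prod.exhaust)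
  obtain z v X where u: "u = (z, v, X)" by (metis prod.exhaust)
  obtain s1 x1 where p: "p = (s1, x1)" by (metis prod.exhaust)
  obtain s2 x2 where q: "q = (s2, x2)" by (metis prod.exhaust)
  have Y: "Y \<in> sp" and X: "X \<in> sp" using assms y u by (auto simp: hsp_def)
  note skewY = omega_sp_left[OF Y, unfolded omega_def]
    and skewX = omega_sp_left[OF X, unfolded omega_def]
    and symX = omega_sp_sym[OF X, unfolded omega_def]
  show ?thesis
    unfolding y u p q qform_def act_def br_simp omega_def
    by (simp add: inner_add_left inner_add_right inner_diff_left inner_diff_right
        matrix_vector_mult_diff_rdistrib matrix_vector_mul_assoc[symmetric] matrix_vector_right_distrib
        matrix_vector_mult_scaleR matrix_vector_mult_uminus_right algebra_simps)
      (use skewY[of v x1] skewY[of v x2] skewX[of a x1] skewX[of a x2] skewY[of x1 "X *v x2"]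
        symX[of a x1] symX[of a x2] omega_skew[of a v, unfolded omega_def] in \<open>simp add: field_simps\<close>)
qed

lemma br_funpow_in_hsp: "y \<in> hsp \<Longrightarrow> u \<in> hsp \<Longrightarrow> (br y ^^ k) u \<in> hsp"
  by (induction k) (auto intro: br_in_hsp)

lemma qform_funpow_br:
  assumes "y \<in> hsp" "u \<in> hsp"
  shows "qform ((br y ^^ k) u) p q
    = (\<Sum>r\<le>k. real (k choose r) * qform u ((act y ^^ r) p) ((act y ^^ (k - r)) q))"
proof (induction k arbitrary: p q)
  case 0 then show ?case by simp
next
  case (Suc k)
  have shift1: "(act y ^^ r) (act y p) = (act y ^^ Suc r) p" for r
    by (simp add: funpow_swap1)
  have shift2: "(act y ^^ (k - r)) (act y q) = (act y ^^ (Suc k - r)) q" if "r \<le> k" for r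
    using that by (simp add: Suc_diff_le funpow_swap1)
  have "qform ((br y ^^ Suc k) u) p q
      = qform ((br y ^^ k) u) (act y p) q + qform ((br y ^^ k) u) p (act y q)"
    using qform_br[OF assms(1) br_funpow_in_hsp[OF assms]] by simp
  also have "\<dots> = (\<Sum>r\<le>k. real (k choose r) * qform u ((act y ^^ Suc r) p) ((act y ^^ (k - r)) q))
                 + (\<Sum>r\<le>k. real (k choose r) * qform u ((act y ^^ r) p) ((act y ^^ (Suc k - r)) q))"
    unfolding Suc.IH shift1 by (intro arg_cong2[where f="(+)"] refl sum.cong) (simp_all add: shift2)
  also have "\<dots> = (\<Sum>r\<le>Suc k. real (Suc k choose r) * qform u ((act y ^^ r) p) ((act y ^^ (Suc k - r)) q))"
    by (rule sum_binomial_Pascal)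
  finally show ?case .
qed

lemma qform_expad:
  assumes "y \<in> hsp" "u \<in> hsp"
  shows "qform (expad y u) p p = qform u (op_exp (act y) p) (op_exp (act y) p)"
proof -
  define a where "a r = (inverse (fact r) :: real) *\<^sub>R (act y ^^ r) p" for r
  have coeff: "inverse (fact k) * real (k choose r) = inverse (fact r) * inverse (fact (k - r) :: real)"
    if "r \<le> k" for k r
    by (simp add: binomial_fact[OF that] field_simps)
  have "qform (expad y u) p p = (\<Sum>k. (inverse (fact k) :: real) *\<^sub>R qform ((br y ^^ k) u) p p)"
    unfolding expad_eq_op_exp
    by (rule bounded_linear_op_exp[OF linear_br linear_qform_elem[THEN linear_conv_bounded_linear[THEN iffD1]]])
  also have "\<dots> = (\<Sum>k. \<Sum>r\<le>k. qform u (a r) (a (k - r)))"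
    by (simp add: qform_funpow_br[OF assms] sum_distrib_left a_def qform_scaleR coeff mult.assoc[symmetric])
  also have "\<dots> = qform u (suminf a) (suminf a)"
    by (rule sums_unique[symmetric], rule bilinear_Cauchy_product_sums[OF linear_qform_left linear_qform_right])
      (use summable_norm_op_exp_series[OF linear_act, of y p] in \<open>simp_all add: a_def\<close>)
  also have "suminf a = op_exp (act y) p" unfolding a_def op_exp_def ..
  finally show ?thesis .
qed

lemma fst_op_exp_act: "fst (op_exp (act y) p) = fst p"
proof -
  have "fst (op_exp (act y) p) = (\<Sum>k. (inverse (fact k) :: real) *\<^sub>R fst ((act y ^^ k) p))"
    by (rule bounded_linear_op_exp[OF linear_act bounded_linear_fst])
  also have "\<dots> = (\<Sum>k\<in>{0}. (inverse (fact k) :: real) *\<^sub>R fst ((act y ^^ k) p))"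
    by (rule suminf_finite) (auto simp: act_def gr0_conv_Suc)
  finally show ?thesis by simp
qed

definition hamiltonian :: "('n::finite) jac \<Rightarrow> 'n vec2 \<Rightarrow> real" where
  "hamiltonian u x = qform u (1, x) (1, x)"

definition quad_part :: "('n::finite) jac \<Rightarrow> 'n vec2 \<Rightarrow> real" where
  "quad_part u x = - omega x (snd (snd u) *v x) / 2"

lemma hamiltonian_eq: "hamiltonian u x = fst u + omega (fst (snd u)) x + quad_part u x"
  by (simp add: hamiltonian_def qform_def quad_part_def)

lemma linear_hamiltonian: "linear (\<lambda>u. hamiltonian u x)"
  unfolding hamiltonian_def by (rule linear_qform_elem)

lemma hamiltonian_add: "hamiltonian (u + w) x = hamiltonian u x + hamiltonian w x"
  using linear_add[OF linear_hamiltonian] .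

lemma hamiltonian_scaleR: "hamiltonian (c *\<^sub>R u) x = c * hamiltonian u x"
  using linear_scale[OF linear_hamiltonian] by simp

lemma linear_quad_part: "linear (\<lambda>u. quad_part u x)"
  by (rule linearI) (simp_all add: quad_part_def omega_def matrix_vector_mult_add_rdistrib
      inner_add_right matrix_vector_right_distrib scaleR_matrix_vector_assoc[symmetric]
      matrix_vector_mult_scaleR field_simps)

lemma quad_part_scale_arg: "quad_part u (s *\<^sub>R x) = s^2 * quad_part u x"
  by (simp add: quad_part_def omega_def matrix_vector_mult_scaleR power2_eq_square)

lemma hamiltonian_scale_arg:
  "hamiltonian u (s *\<^sub>R x) = fst u + s * omega (fst (snd u)) x + s^2 * quad_part u x"
  by (simp add: hamiltonian_eq quad_part_scale_arg omega_def matrix_vector_mult_scaleR)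

lemma hamiltonian_second_difference:
  "hamiltonian u (b + w) + hamiltonian u (b - w) - 2 * hamiltonian u b = 2 * quad_part u w"
  by (simp add: hamiltonian_eq quad_part_def omega_def inner_add_left inner_add_right
      inner_diff_left inner_diff_right matrix_vector_right_distrib matrix_vector_mult_diff_distrib field_simps)

text \<open>e^{ad y} is dual to the flow of act y, which preserves the hyperplane {1} \<times> V.\<close>

lemma hamiltonian_expad:
  assumes "y \<in> hsp"
  obtains g b where "linear g" "\<And>u x. u \<in> hsp \<Longrightarrow> hamiltonian (expad y u) x = hamiltonian u (g x + b)"
proof -
  define E where "E = op_exp (act y)"
  have lin: "linear E" unfolding E_def by (rule linear_op_exp[OF linear_act])
  define g where "g x = snd (E (0, x))" for x
  define b where "b = snd (E (1, 0))"
  have embed: "linear (\<lambda>x::'a vec2. (0::real, x))" by (rule linearI) auto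
  have "linear g"
    unfolding g_def[abs_def] using linear_compose[OF linear_compose[OF embed lin] linear_snd] by (simp add: o_def)
  moreover have "E (1, x) = (1, g x + b)" for x
  proof -
    have "E (1, x) = E (1, 0) + E (0, x)" using linear_add[OF lin, of "(1, 0)" "(0, x)"] by simp
    then show ?thesis using fst_op_exp_act[of y "(1, x)"]
      by (simp add: g_def b_def E_def prod_eq_iff)
  qed
  then have "hamiltonian (expad y u) x = hamiltonian u (g x + b)" if "u \<in> hsp" for u x
    by (simp add: hamiltonian_def qform_expad[OF assms that] E_def)
  ultimately show ?thesis by (rule that)
qed

lemma quad_part_expad:
  assumes "y \<in> hsp"
  obtains g where "\<And>u x. u \<in> hsp \<Longrightarrow> quad_part (expad y u) x = quad_part u (g x)"
proof -
  obtain g b where lg: "linear g"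
    and h: "\<And>u x. u \<in> hsp \<Longrightarrow> hamiltonian (expad y u) x = hamiltonian u (g x + b)"
    by (rule hamiltonian_expad[OF assms]) blast
  have "quad_part (expad y u) x = quad_part u (g x)" if "u \<in> hsp" for u x
  proof -
    have "2 * quad_part (expad y u) x
        = hamiltonian u (g x + b) + hamiltonian u (g (- x) + b) - 2 * hamiltonian u (g 0 + b)"
      using hamiltonian_second_difference[of "expad y u" 0 x] by (simp add: h[OF that])
    also have "\<dots> = hamiltonian u (b + g x) + hamiltonian u (b - g x) - 2 * hamiltonian u b"
      by (simp add: linear_neg[OF lg] linear_0[OF lg] add.commute)
    also have "\<dots> = 2 * quad_part u (g x)" by (rule hamiltonian_second_difference)
    finally show ?thesis by simp
  qed
  then show ?thesis by (rule that)
qed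

lemma quad_part_eq_0_imp:
  assumes "u \<in> hsp" "\<And>x. quad_part u x = 0"
  shows "snd (snd u) = 0"
proof -
  obtain z v X where u: "u = (z, v, X)" by (metis prod.exhaust)
  have X: "X \<in> sp" using assms u by (simp add: hsp_def)
  have q: "omega x (X *v x) = 0" for x using assms(2)[of x] u by (simp add: quad_part_def)
  have polar: "omega x (X *v w) = 0" for x w
    using q[of "x + w"] q[of x] q[of w] omega_sp_sym[OF X, of x w]
    by (simp add: omega_def matrix_vector_right_distrib inner_add_left inner_add_right)
  have "X *v w = 0" for w
  proof -
    have "(symJ *v (X *v w)) \<bullet> (symJ *v (X *v w)) = 0"
      using polar[of "symJ *v (X *v w)" w] by (simp add: omega_def)
    then have "symJ *v (X *v w) = 0" by simp
    then show ?thesis using symJ_symJ[of "X *v w"] by simp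
  qed
  then show ?thesis using matrix_eq[of X 0] u by simp
qed

lemma hamiltonian_eq_0_imp:
  assumes "u \<in> hsp" "\<And>x. hamiltonian u x = 0"
  shows "u = 0"
proof -
  obtain z v X where u: "u = (z, v, X)" by (metis prod.exhaust)
  have Q: "quad_part u x = 0" for x
    using hamiltonian_second_difference[of u 0 x] assms(2) by simp
  then have X: "X = 0" using quad_part_eq_0_imp[OF assms(1)] u by simp
  have z: "z = 0" using assms(2)[of 0] u Q by (simp add: hamiltonian_eq omega_def)
  have "omega v x = 0" for x using assms(2)[of x] u z Q by (simp add: hamiltonian_eq)
  then have "v \<bullet> v = 0" using omega_symJ_self[of v] by simp
  then show ?thesis using u X z by (simp add: zero_prod_def)
qed

lemma hamiltonian_quadratic_bound:
  obtains N where "N \<ge> 0" "\<And>x. \<bar>hamiltonian u x\<bar> \<le> N * (1 + x \<bullet> x)"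
proof -
  obtain z v X where u: "u = (z, v, X)" by (metis prod.exhaust)
  obtain K where K: "\<And>x::'a vec2. norm (symJ *v (X *v x)) \<le> norm x * K" "0 < K"
    using bounded_linear.pos_bounded matrix_vector_mul_bounded_linear
      bounded_linear_compose[of "(*v) symJ" "(*v) X"] by (metis o_def)
  obtain K2 where K2: "\<And>x::'a vec2. norm (symJ *v x) \<le> norm x * K2" "0 < K2"
    using bounded_linear.pos_bounded matrix_vector_mul_bounded_linear by blast
  define N where "N = \<bar>z\<bar> + norm v * K2 + K"
  have "\<bar>hamiltonian u x\<bar> \<le> N * (1 + x \<bullet> x)" for x
  proof -
    have nx: "norm x \<le> 1 + norm x ^ 2"
      using sum_squares_bound[of 1 "norm x"] norm_ge_zero[of x] unfolding power2_eq_square by linarith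
    have h1: "\<bar>v \<bullet> (symJ *v x)\<bar> \<le> norm v * (norm x * K2)"
      using Cauchy_Schwarz_ineq2[of v "symJ *v x"] mult_left_mono[OF K2(1), of "norm v" x] by simp
    have h2: "\<bar>x \<bullet> (symJ *v (X *v x))\<bar> \<le> norm x * (norm x * K)"
      using Cauchy_Schwarz_ineq2[of x "symJ *v (X *v x)"] mult_left_mono[OF K(1), of "norm x" x] by simp
    have "\<bar>hamiltonian u x\<bar> \<le> \<bar>z\<bar> + norm v * K2 * norm x + K * norm x ^ 2"
      using h1 h2 by (simp add: u hamiltonian_eq omega_def quad_part_def power2_eq_square ac_simps)
    also have "\<dots> \<le> \<bar>z\<bar> * (1 + norm x ^ 2) + norm v * K2 * (1 + norm x ^ 2) + K * (1 + norm x ^ 2)"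
      using mult_left_mono[OF nx, of "norm v * K2"] K K2 by (intro add_mono) (simp_all add: mult_le_cancel_left1)
    also have "\<dots> = N * (1 + x \<bullet> x)" by (simp add: N_def power2_norm_eq_inner algebra_simps)
    finally show ?thesis .
  qed
  moreover have "N \<ge> 0" using K K2 by (simp add: N_def)
  ultimately show ?thesis using that by blast
qed

definition central_unit :: "('n::finite) jac" where
  "central_unit = (1, 0, 0)"

lemma central_unit_in_hsp: "central_unit \<in> hsp"
  by (simp add: central_unit_def hsp_def subspace_0[OF subspace_sp])

lemma central_unit_nonzero: "central_unit \<noteq> 0"
  by (simp add: central_unit_def zero_prod_def)

lemma hamiltonian_central_unit: "hamiltonian central_unit x = 1"
  by (simp add: hamiltonian_eq central_unit_def quad_part_def omega_def)

definition oscillator :: "('n::finite) jac" where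
  "oscillator = (1, 0, 2 *\<^sub>R symJ)"

lemma oscillator_in_hsp: "oscillator \<in> hsp"
  using subspace_scale[OF subspace_sp symJ_in_sp] by (simp add: oscillator_def hsp_def)

lemma hamiltonian_oscillator: "hamiltonian oscillator x = 1 + x \<bullet> x"
  by (simp add: hamiltonian_eq oscillator_def quad_part_def omega_def scaleR_matrix_vector_assoc[symmetric]
      matrix_vector_mult_scaleR symJ_symJ)

lemma linear_expad: "linear (expad y)"
  unfolding expad_eq_op_exp by (rule linear_op_exp[OF linear_br])

lemma expad_in_hsp: "y \<in> hsp \<Longrightarrow> u \<in> hsp \<Longrightarrow> expad y u \<in> hsp"
  unfolding expad_eq_op_exp by (rule op_exp_in_subspace[OF linear_br subspace_hsp br_in_hsp])

lemma Inn_invariant: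
  assumes "\<phi> \<in> Inn" "u \<in> S" "\<And>y u. y \<in> hsp \<Longrightarrow> u \<in> S \<Longrightarrow> expad y u \<in> S"
  shows "\<phi> u \<in> S"
  using assms(1,2) by (induction rule: Inn.induct) (auto intro: assms(3))

lemma linear_Inn: "\<phi> \<in> Inn \<Longrightarrow> linear \<phi>"
proof (induction rule: Inn.induct)
  case Inn_id then show ?case by (simp add: linear_id id_def module_hom_ident)
next
  case (Inn_step y \<phi>)
  then show ?case using linear_compose[OF Inn_step.IH linear_expad] by (simp add: o_def)
qed

lemma Inn_in_hsp: "\<phi> \<in> Inn \<Longrightarrow> u \<in> hsp \<Longrightarrow> \<phi> u \<in> hsp"
  by (rule Inn_invariant[OF _ _ expad_in_hsp])

lemma Inn_comp: "\<phi> \<in> Inn \<Longrightarrow> \<psi> \<in> Inn \<Longrightarrow> (\<lambda>u. \<phi> (\<psi> u)) \<in> Inn"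
  by (induction rule: Inn.induct) (auto intro: Inn.Inn_step)

lemma expad_translation:
  "expad (0, a, 0) (z, v, X) = (z + omega a v - omega a (X *v a) / 2, v - X *v a, X)"
proof -
  have b1: "br (0, a, 0) (z, v, X) = (omega a v, - (X *v a), 0)" by (simp add: br_simp)
  have b2: "br (0, a, 0) (omega a v, - (X *v a), 0) = (- omega a (X *v a), 0, 0)"
    by (simp add: br_simp omega_def matrix_vector_mult_uminus_right)
  have "br (0, a, 0) (br (0, a, 0) (br (0, a, 0) (z, v, X))) = 0"
    by (simp add: b1 b2 br_simp omega_def zero_prod_def)
  then show ?thesis by (simp add: op_exp_nilpotent_3[OF linear_br] expad_eq_op_exp b1 b2)
qed

lemma translation_in_Inn: "expad (0, a, 0) \<in> Inn"
  using Inn_step[OF _ Inn_id, of "(0, a, 0)"] by (simp add: hsp_def subspace_0[OF subspace_sp])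

section \<open>Closed convex cones\<close>

lemma closed_convex_cone_recession:
  fixes K :: "'a::real_normed_vector set"
  assumes "closed K" "convex_cone K" "\<And>t. t \<ge> 0 \<Longrightarrow> a + t *\<^sub>R d \<in> K"
  shows "d \<in> K"
proof (rule Lim_in_closed_set[OF assms(1)])
  show "eventually (\<lambda>t. inverse t *\<^sub>R a + d \<in> K) at_top"
    using eventually_gt_at_top[of "0::real"]
  proof (rule eventually_mono)
    fix t :: real assume t: "0 < t"
    have "inverse t *\<^sub>R (a + t *\<^sub>R d) \<in> K"
      using convex_cone_scaleR[OF assms(2) _ assms(3)] t by simp
    then show "inverse t *\<^sub>R a + d \<in> K" using t by (simp add: scaleR_add_right)
  qed
  have "((\<lambda>t. inverse t *\<^sub>R a) \<longlongrightarrow> 0 *\<^sub>R a) (at_top :: real filter)"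
    by (intro tendsto_scaleR tendsto_inverse_0_at_top filterlim_ident tendsto_const)
  then show "((\<lambda>t. inverse t *\<^sub>R a + d) \<longlongrightarrow> d) (at_top :: real filter)"
    using tendsto_add[OF _ tendsto_const[of d]] by fastforce
qed simp

lemma pointed_convex_coneD:
  fixes K :: "'a::real_vector set"
  assumes "convex_cone K" "pointed K" "c \<in> K" "- c \<in> K"
  shows "c = 0"
proof (rule ccontr)
  have "0 + t *\<^sub>R c \<in> K" for t
  proof (cases "t \<ge> 0")
    case True then show ?thesis using convex_cone_scaleR[OF assms(1) True assms(3)] by simp
  next
    case False
    then show ?thesis using convex_cone_scaleR[OF assms(1) _ assms(4), of "- t"] by simp
  qed
  moreover assume "c \<noteq> 0"
  ultimately show False using assms(2) unfolding pointed_def by blast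
qed

lemma pointed_closed_convex_coneI:
  fixes K :: "'a::real_normed_vector set"
  assumes "closed K" "convex_cone K" "\<And>c. c \<in> K \<Longrightarrow> - c \<in> K \<Longrightarrow> c = 0"
  shows "pointed K"
  unfolding pointed_def
proof
  assume "\<exists>a d. d \<noteq> 0 \<and> (\<forall>t. a + t *\<^sub>R d \<in> K)"
  then obtain a d where "d \<noteq> 0" and line: "\<And>t. a + t *\<^sub>R d \<in> K" by blast
  moreover have "d \<in> K" by (rule closed_convex_cone_recession[OF assms(1,2) line])
  moreover have "- d \<in> K"
    by (rule closed_convex_cone_recession[OF assms(1,2), of a]) (use line[of "- _"] in simp)
  ultimately show False using assms(3) by blast
qed

lemma closed_convex_cone_pointwise_nonneg:
  fixes F :: "'a::euclidean_space \<Rightarrow> 'b \<Rightarrow> real"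
  assumes S: "subspace S" and F: "\<And>x. linear (\<lambda>u. F u x)"
  shows "closed {u \<in> S. \<forall>x. 0 \<le> s * F u x}" "convex_cone {u \<in> S. \<forall>x. 0 \<le> s * F u x}"
proof -
  have "continuous_on UNIV (\<lambda>u. F u x)" for x
    by (rule linear_continuous_on[OF linear_conv_bounded_linear[THEN iffD1, OF F]])
  then have "closed {u. 0 \<le> s * F u x}" for x
    by (intro closed_Collect_le continuous_intros) auto
  moreover have "{u \<in> S. \<forall>x. 0 \<le> s * F u x} = S \<inter> (\<Inter>x. {u. 0 \<le> s * F u x})" by auto
  ultimately show "closed {u \<in> S. \<forall>x. 0 \<le> s * F u x}"
    using closed_subspace[OF S] by (auto intro!: closed_Int closed_INT)
  show "convex_cone {u \<in> S. \<forall>x. 0 \<le> s * F u x}"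
    unfolding convex_cone_iff
    using subspace_0[OF S] subspace_add[OF S] subspace_scale[OF S]
      linear_0[OF F] linear_add[OF F] linear_scale[OF F]
    by (auto simp: distrib_left mult.left_commute)
qed

lemma convex_cone_set_plus:
  assumes "convex_cone C" "convex_cone D"
  shows "convex_cone (C + D)"
  unfolding convex_cone_iff
proof (intro conjI ballI allI impI)
  show "0 \<in> C + D" using set_plus_intro[OF convex_cone_contains_0 convex_cone_contains_0, OF assms] by simp
next
  fix x y assume "x \<in> C + D" "y \<in> C + D"
  then obtain c d c' d' where "x = c + d" "y = c' + d'" "c \<in> C" "d \<in> D" "c' \<in> C" "d' \<in> D"
    by (metis set_plus_elim)
  then show "x + y \<in> C + D"
    using set_plus_intro[OF convex_cone_add[OF assms(1)] convex_cone_add[OF assms(2)], of c c' d d']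
    by (simp add: ac_simps)
next
  fix x and t :: real assume "x \<in> C + D" "0 \<le> t"
  then obtain c d where "x = c + d" "c \<in> C" "d \<in> D" by (metis set_plus_elim)
  then show "t *\<^sub>R x \<in> C + D"
    using set_plus_intro[OF convex_cone_scaleR[OF assms(1) \<open>0 \<le> t\<close>] convex_cone_scaleR[OF assms(2) \<open>0 \<le> t\<close>]]
    by (simp add: scaleR_add_right)
qed

text \<open>Minimise the distance to -D over the compact unit sphere of C.\<close>

lemma convex_cone_sum_norm_bound:
  fixes C D :: "'a::euclidean_space set"
  assumes clC: "closed C" and clD: "closed D" and ccC: "convex_cone C" and ccD: "convex_cone D"
    and disj: "\<And>c. c \<in> C \<Longrightarrow> - c \<in> D \<Longrightarrow> c = 0"
  obtains e where "e > 0" "\<And>c d. c \<in> C \<Longrightarrow> d \<in> D \<Longrightarrow> e * norm c \<le> norm (c + d)"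
proof (cases "C \<inter> sphere 0 1 = {}")
  case True
  have "c = 0" if "c \<in> C" for c
  proof (rule ccontr)
    assume "c \<noteq> 0"
    then have "inverse (norm c) *\<^sub>R c \<in> C \<inter> sphere 0 1"
      using convex_cone_scaleR[OF ccC _ that, of "inverse (norm c)"] by simp
    then show False using True by blast
  qed
  then show ?thesis using that[of 1] by force
next
  case False
  have "compact (C \<inter> sphere 0 1)" by (simp add: clC compact_Int_closed closed_Int_compact)
  moreover have "continuous_on (C \<inter> sphere 0 1) (\<lambda>c. infdist (- c) D)"
    by (intro continuous_intros)
  ultimately obtain c0 where c0: "c0 \<in> C \<inter> sphere 0 1"
    and mn: "\<And>c. c \<in> C \<inter> sphere 0 1 \<Longrightarrow> infdist (- c0) D \<le> infdist (- c) D"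
    using continuous_attains_inf[OF _ False] by blast
  have "- c0 \<notin> D" using disj c0 by force
  then have epos: "infdist (- c0) D > 0"
    using infdist_pos_not_in_closed[OF clD convex_cone_nonempty[OF ccD]] by blast
  have "infdist (- c0) D * norm c \<le> norm (c + d)" if c: "c \<in> C" and d: "d \<in> D" for c d
  proof (cases "c = 0")
    case False
    define n where "n = norm c"
    have n: "n > 0" using False by (simp add: n_def)
    have cs: "inverse n *\<^sub>R c \<in> C \<inter> sphere 0 1"
      using convex_cone_scaleR[OF ccC _ c, of "inverse n"] n by (simp add: n_def)
    have ds: "inverse n *\<^sub>R d \<in> D" using convex_cone_scaleR[OF ccD _ d, of "inverse n"] n by simp
    have "infdist (- c0) D \<le> infdist (- (inverse n *\<^sub>R c)) D" using mn[OF cs] .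
    also have "\<dots> \<le> dist (- (inverse n *\<^sub>R c)) (inverse n *\<^sub>R d)" by (rule infdist_le[OF ds])
    also have "\<dots> = inverse n * norm (c + d)"
      using n by (simp add: dist_norm norm_minus_commute[of "- _"] scaleR_add_right[symmetric] add.commute)
    finally show ?thesis using n by (simp add: n_def field_simps)
  qed simp
  then show ?thesis using epos that by blast
qed

lemma closed_set_plus_convex_cone:
  fixes C D :: "'a::euclidean_space set"
  assumes clC: "closed C" and clD: "closed D" and ccC: "convex_cone C" and ccD: "convex_cone D"
    and disj: "\<And>c. c \<in> C \<Longrightarrow> - c \<in> D \<Longrightarrow> c = 0"
  shows "closed (C + D)"
proof -
  obtain e where e: "e > 0" "\<And>c d. c \<in> C \<Longrightarrow> d \<in> D \<Longrightarrow> e * norm c \<le> norm (c + d)"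
    using convex_cone_sum_norm_bound[OF assms] by blast
  have "l \<in> C + D" if l: "l \<in> closure (C + D)" for l
  proof -
    define R where "R = (norm l + 1) / e"
    define T where "T = (\<Union>x\<in>D. \<Union>y\<in>C \<inter> cball 0 R. {x + y})"
    have "closed T" unfolding T_def
      by (rule closed_compact_sums[OF clD]) (simp add: clC compact_Int_closed closed_Int_compact)
    moreover have "T \<subseteq> C + D"
    proof
      fix w assume "w \<in> T"
      then obtain x y where "x \<in> D" "y \<in> C" "w = y + x" unfolding T_def by (auto simp: add.commute)
      then show "w \<in> C + D" by auto
    qed
    moreover have "l \<in> closure T"
      unfolding closure_approachable
    proof (intro allI impI)
      fix r :: real assume r: "r > 0"
      obtain y where y: "y \<in> C + D" "dist y l < min r 1"
        using l r unfolding closure_approachable by (metis min_less_iff_conj zero_less_one)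
      then obtain c d where cd: "y = c + d" "c \<in> C" "d \<in> D" by (metis set_plus_elim)
      have "e * norm c \<le> norm l + 1"
        using e(2)[OF cd(2,3)] cd(1) y(2) norm_triangle_ineq2[of y l] by (simp add: dist_norm)
      then have "c \<in> C \<inter> cball 0 R" using e(1) cd(2) by (simp add: R_def field_simps)
      moreover have "y = d + c" using cd(1) by (simp add: add.commute)
      ultimately have "y \<in> T" unfolding T_def using cd(3) by blast
      then show "\<exists>y\<in>T. dist y l < r" using y(2) by auto
    qed
    ultimately show ?thesis using closure_closed by auto
  qed
  then show ?thesis using closure_subset_eq by blast
qed

lemma pointed_set_plus_convex_cone:
  fixes C D :: "'a::euclidean_space set"
  assumes clC: "closed C" and clD: "closed D" and ccC: "convex_cone C" and ccD: "convex_cone D"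
    and pC: "\<And>c. c \<in> C \<Longrightarrow> - c \<in> C \<Longrightarrow> c = 0"
    and pD: "\<And>c. c \<in> D \<Longrightarrow> - c \<in> D \<Longrightarrow> c = 0"
    and disj: "\<And>c. c \<in> C \<Longrightarrow> - c \<in> D \<Longrightarrow> c = 0"
  shows "pointed (C + D)"
proof (rule pointed_closed_convex_coneI[OF closed_set_plus_convex_cone[OF clC clD ccC ccD disj]
      convex_cone_set_plus[OF ccC ccD]])
  fix s assume "s \<in> C + D" "- s \<in> C + D"
  then obtain c1 d1 c2 d2 where 1: "s = c1 + d1" "c1 \<in> C" "d1 \<in> D"
    and 2: "- s = c2 + d2" "c2 \<in> C" "d2 \<in> D" by (metis set_plus_elim)
  have "(c1 + d1) + (c2 + d2) = 0" using 1(1) 2(1) by (metis add.right_inverse)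
  then have e: "c1 + c2 = - (d1 + d2)" by (simp add: algebra_simps eq_neg_iff_add_eq_0)
  have "- (c1 + c2) \<in> D" using convex_cone_add[OF ccD 1(3) 2(3)] by (simp only: e minus_minus)
  then have c0: "c1 + c2 = 0" using disj convex_cone_add[OF ccC 1(2) 2(2)] by blast
  then have "c2 = - c1" by (simp add: add_eq_0_iff)
  then have "c1 = 0" using pC[OF 1(2)] 2(2) by simp
  have "d2 = - d1" using e c0 by (simp add: add_eq_0_iff)
  then have "d1 = 0" using pD[OF 1(3)] 2(3) by simp
  then show "s = 0" using 1 \<open>c1 = 0\<close> by simp
qed

section \<open>The invariant cones of sign-definite functions\<close>

definition hamiltonian_cone :: "real \<Rightarrow> ('n::finite) jac set" where
  "hamiltonian_cone s = {u \<in> hsp. \<forall>x. 0 \<le> s * hamiltonian u x}"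

definition quad_part_cone :: "real \<Rightarrow> ('n::finite) jac set" where
  "quad_part_cone s = {u \<in> hsp. \<forall>x. 0 \<le> s * quad_part u x}"

definition invariant_pointed_generating_cone :: "('n::finite) jac set \<Rightarrow> bool" where
  "invariant_pointed_generating_cone W \<longleftrightarrow> W \<subseteq> hsp \<and> closed W \<and> convex_cone W \<and> pointed W
     \<and> span W = hsp \<and> (\<forall>\<phi>\<in>Inn. \<phi> ` W \<subseteq> W)"

lemma
  shows closed_hamiltonian_cone: "closed (hamiltonian_cone s)"
    and convex_cone_hamiltonian_cone: "convex_cone (hamiltonian_cone s)"
  using closed_convex_cone_pointwise_nonneg[OF subspace_hsp linear_hamiltonian]
  unfolding hamiltonian_cone_def .

lemma
  shows closed_quad_part_cone: "closed (quad_part_cone s)"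
    and convex_cone_quad_part_cone: "convex_cone (quad_part_cone s)"
  using closed_convex_cone_pointwise_nonneg[OF subspace_hsp linear_quad_part]
  unfolding quad_part_cone_def .

lemma expad_hamiltonian_cone:
  assumes y: "y \<in> hsp" and u: "u \<in> hamiltonian_cone s"
  shows "expad y u \<in> hamiltonian_cone s"
proof -
  obtain g b where "linear g" and h: "\<And>u x. u \<in> hsp \<Longrightarrow> hamiltonian (expad y u) x = hamiltonian u (g x + b)"
    by (rule hamiltonian_expad[OF y]) blast
  have "0 \<le> s * hamiltonian (expad y u) x" for x
    using u h[of u x] by (simp add: hamiltonian_cone_def)
  then show ?thesis using expad_in_hsp[OF y] u by (simp add: hamiltonian_cone_def)
qed

lemma expad_quad_part_cone:
  assumes y: "y \<in> hsp" and u: "u \<in> quad_part_cone s"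
  shows "expad y u \<in> quad_part_cone s"
proof -
  obtain g where h: "\<And>u x. u \<in> hsp \<Longrightarrow> quad_part (expad y u) x = quad_part u (g x)"
    by (rule quad_part_expad[OF y]) blast
  have "0 \<le> s * quad_part (expad y u) x" for x
    using u h[of u x] by (simp add: quad_part_cone_def)
  then show ?thesis using expad_in_hsp[OF y] u by (simp add: quad_part_cone_def)
qed

lemma Inn_hamiltonian_cone: "\<phi> \<in> Inn \<Longrightarrow> u \<in> hamiltonian_cone s \<Longrightarrow> \<phi> u \<in> hamiltonian_cone s"
  by (rule Inn_invariant[OF _ _ expad_hamiltonian_cone])

lemma Inn_quad_part_cone: "\<phi> \<in> Inn \<Longrightarrow> u \<in> quad_part_cone s \<Longrightarrow> \<phi> u \<in> quad_part_cone s"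
  by (rule Inn_invariant[OF _ _ expad_quad_part_cone])

lemma hamiltonian_cone_opposite:
  assumes "s \<noteq> 0" "u \<in> hamiltonian_cone s" "- u \<in> hamiltonian_cone s"
  shows "u = 0"
proof (rule hamiltonian_eq_0_imp)
  show "u \<in> hsp" using assms(2) by (simp add: hamiltonian_cone_def)
  fix x
  have "0 \<le> s * hamiltonian u x" "0 \<le> s * hamiltonian (- u) x"
    using assms(2,3) by (auto simp: hamiltonian_cone_def)
  then show "hamiltonian u x = 0"
    using assms(1) hamiltonian_scaleR[of "-1" u x] by simp
qed

lemma pointed_hamiltonian_cone: "s \<noteq> 0 \<Longrightarrow> pointed (hamiltonian_cone s)"
  by (intro pointed_closed_convex_coneI closed_hamiltonian_cone convex_cone_hamiltonian_cone
      hamiltonian_cone_opposite)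

text \<open>Every element becomes sign-definite after adding a large multiple of the oscillator.\<close>

lemma span_hamiltonian_cone:
  assumes s: "\<bar>s\<bar> = 1"
  shows "span (hamiltonian_cone s) = hsp"
proof
  show "span (hamiltonian_cone s) \<subseteq> hsp"
    by (rule span_minimal[OF _ subspace_hsp]) (auto simp: hamiltonian_cone_def)
next
  have ss: "s * s = 1" using s by (metis abs_mult_self_eq mult_1_right)
  have osc: "s *\<^sub>R oscillator \<in> hamiltonian_cone s"
    using subspace_scale[OF subspace_hsp oscillator_in_hsp]
    by (simp add: hamiltonian_cone_def hamiltonian_scaleR hamiltonian_oscillator mult.assoc[symmetric] ss)
  show "hsp \<subseteq> span (hamiltonian_cone s)"
  proof
    fix u assume u: "u \<in> hsp"
    obtain N where N: "N \<ge> 0" "\<And>x. \<bar>hamiltonian u x\<bar> \<le> N * (1 + x \<bullet> x)"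
      using hamiltonian_quadratic_bound by blast
    define w where "w = u + N *\<^sub>R (s *\<^sub>R oscillator)"
    have eq: "s * hamiltonian w x = s * hamiltonian u x + N * (1 + x \<bullet> x)" for x
      by (simp add: w_def hamiltonian_add hamiltonian_scaleR hamiltonian_oscillator distrib_left
          mult.left_commute mult.assoc[symmetric] ss)
    have bound: "\<bar>s * hamiltonian u x\<bar> \<le> N * (1 + x \<bullet> x)" for x
      using N(2)[of x] s by (simp add: abs_mult)
    have "w \<in> hsp" unfolding w_def
      by (intro subspace_add[OF subspace_hsp] u subspace_scale[OF subspace_hsp] oscillator_in_hsp)
    moreover have "0 \<le> s * hamiltonian w x" for x using eq[of x] bound[of x] by linarith
    ultimately have "w \<in> hamiltonian_cone s" by (simp add: hamiltonian_cone_def)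
    then have "w - N *\<^sub>R (s *\<^sub>R oscillator) \<in> span (hamiltonian_cone s)"
      by (intro span_diff span_base span_scale osc)
    then show "u \<in> span (hamiltonian_cone s)" by (simp add: w_def)
  qed
qed

lemma invariant_pointed_generating_hamiltonian_cone:
  "\<bar>s\<bar> = 1 \<Longrightarrow> invariant_pointed_generating_cone (hamiltonian_cone s)"
  unfolding invariant_pointed_generating_cone_def
  using closed_hamiltonian_cone convex_cone_hamiltonian_cone pointed_hamiltonian_cone[of s]
    span_hamiltonian_cone[of s] Inn_hamiltonian_cone[of _ _ s]
  by (fastforce simp: hamiltonian_cone_def)

lemma quadratic_opposite_sign_const:
  fixes s z l q :: real
  assumes s: "s \<noteq> 0" and q: "0 \<le> s * q" and bound: "\<And>t. s * (z + t * l + t^2 * q) \<le> 0"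
  shows "q = 0 \<and> l = 0"
proof -
  have q0: "q = 0"
  proof (rule ccontr)
    assume "q \<noteq> 0"
    then have pos: "s * q > 0" using q s by (simp add: less_le)
    define t where "t = sqrt ((\<bar>s * z\<bar> + 1) / (s * q))"
    have "t^2 = (\<bar>s * z\<bar> + 1) / (s * q)"
      unfolding t_def by (rule real_sqrt_pow2) (use pos in simp)
    then have "t^2 * (s * q) = \<bar>s * z\<bar> + 1" using \<open>q \<noteq> 0\<close> s by simp
    moreover have "s * (z + t * l + t^2 * q) + s * (z + (- t) * l + (- t)^2 * q) = 2 * (s * z + t^2 * (s * q))"
      by (simp add: algebra_simps power2_eq_square)
    ultimately show False using add_nonpos_nonpos[OF bound[of t] bound[of "- t"]] by simp
  qed
  moreover have "l = 0"
  proof (rule ccontr)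
    assume "l \<noteq> 0"
    then have nz: "s * l \<noteq> 0" using s by simp
    define t where "t = (\<bar>s * z\<bar> + 1) / (s * l)"
    have "t * (s * l) = \<bar>s * z\<bar> + 1" using nz by (simp add: t_def)
    moreover have "s * z + t * (s * l) \<le> 0" using bound[of t] q0 by (simp add: algebra_simps)
    ultimately show False by simp
  qed
  ultimately show ?thesis ..
qed

lemma hamiltonian_opposite_sign_central:
  assumes u: "u \<in> hsp" and s: "s \<noteq> 0"
    and Q: "\<And>x. 0 \<le> s * quad_part u x" and H: "\<And>x. s * hamiltonian u x \<le> 0"
  obtains z where "u = z *\<^sub>R central_unit" "s * z \<le> 0"
proof -
  define z where "z = fst u"
  define l where "l x = omega (fst (snd u)) x" for x
  have line: "hamiltonian u (t *\<^sub>R x) = z + t * l x + t^2 * quad_part u x" for t x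
    by (simp add: hamiltonian_scale_arg z_def l_def)
  have Q0: "quad_part u x = 0" and l0: "l x = 0" for x
  proof -
    have "quad_part u x = 0 \<and> l x = 0"
    proof (rule quadratic_opposite_sign_const[OF s Q])
      show "s * (z + t * l x + t^2 * quad_part u x) \<le> 0" for t
        using H[of "t *\<^sub>R x"] by (simp only: line)
    qed
    then show "quad_part u x = 0" "l x = 0" by simp_all
  qed
  have flat: "hamiltonian u x = z" for x using line[of 1 x] l0 Q0 by simp
  have "u - z *\<^sub>R central_unit = 0"
  proof (rule hamiltonian_eq_0_imp)
    show "u - z *\<^sub>R central_unit \<in> hsp"
      by (intro subspace_diff[OF subspace_hsp] u subspace_scale[OF subspace_hsp] central_unit_in_hsp)
    show "hamiltonian (u - z *\<^sub>R central_unit) x = 0" for x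
      using linear_diff[OF linear_hamiltonian, of u "z *\<^sub>R central_unit" x]
      by (simp add: hamiltonian_scaleR flat hamiltonian_central_unit)
  qed
  then have "u = z *\<^sub>R central_unit" by simp
  moreover have "s * z \<le> 0" using H[of 0] flat by simp
  ultimately show ?thesis by (rule that)
qed

section \<open>The cone generated by an orbit\<close>

lemma closed_Cx: "closed (Cx x)"
  by (simp add: Cx_def)

lemma convex_cone_closure: "convex_cone S \<Longrightarrow> convex_cone (closure (S :: 'a::euclidean_space set))"
  unfolding convex_cone_def using conic_closure convex_closure closure_subset by blast

lemma convex_cone_Cx: "convex_cone (Cx x)"
  unfolding Cx_def by (rule convex_cone_closure[OF convex_cone_convex_cone_hull])

lemma Inn_orbit_in_Cx: "\<phi> \<in> Inn \<Longrightarrow> \<phi> x \<in> Cx x"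
  unfolding Cx_def by (intro subsetD[OF closure_subset] hull_inc imageI)

lemma Cx_self: "x \<in> Cx x"
  using Inn_orbit_in_Cx[OF Inn_id] by simp

lemma Cx_least:
  assumes "closed K" "convex_cone K" "\<And>\<phi>. \<phi> \<in> Inn \<Longrightarrow> \<phi> x \<in> K"
  shows "Cx x \<subseteq> K"
  unfolding Cx_def using assms by (intro closure_minimal hull_minimal image_subsetI)

lemma Cx_subset_hsp: "x \<in> hsp \<Longrightarrow> Cx x \<subseteq> hsp"
  by (rule Cx_least[OF closed_subspace[OF subspace_hsp] convex_cone_hsp], erule Inn_in_hsp)

lemma Cx_subset_quad_part_cone: "x \<in> quad_part_cone s \<Longrightarrow> Cx x \<subseteq> quad_part_cone s"
  by (rule Cx_least[OF closed_quad_part_cone convex_cone_quad_part_cone], erule Inn_quad_part_cone)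

lemma Inn_Cx:
  assumes \<phi>: "\<phi> \<in> Inn" shows "\<phi> ` Cx x \<subseteq> Cx x"
proof -
  have lin: "linear \<phi>" by (rule linear_Inn[OF \<phi>])
  have "Cx x \<subseteq> \<phi> -` Cx x"
  proof (rule Cx_least)
    show "closed (\<phi> -` Cx x)"
      by (intro continuous_closed_vimage closed_Cx linear_continuous_at
          linear_conv_bounded_linear[THEN iffD1] lin)
    show "convex_cone (\<phi> -` Cx x)"
      unfolding convex_cone_iff vimage_def
    proof (intro conjI ballI allI impI; simp)
      show "\<phi> 0 \<in> Cx x" using convex_cone_contains_0[OF convex_cone_Cx] by (simp add: linear_0[OF lin])
      show "\<phi> (u + w) \<in> Cx x" if "\<phi> u \<in> Cx x" "\<phi> w \<in> Cx x" for u w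
        using convex_cone_add[OF convex_cone_Cx that] by (simp add: linear_add[OF lin])
      show "\<phi> (c *\<^sub>R u) \<in> Cx x" if "\<phi> u \<in> Cx x" "0 \<le> c" for u c
        using convex_cone_scaleR[OF convex_cone_Cx that(2,1)] by (simp add: linear_scale[OF lin])
    qed
    show "\<psi> x \<in> \<phi> -` Cx x" if "\<psi> \<in> Inn" for \<psi>
      using Inn_orbit_in_Cx[OF Inn_comp[OF \<phi> that]] by simp
  qed
  then show ?thesis by blast
qed

text \<open>Averaging the translates of x by a and -a.\<close>

lemma Cx_add_quad_part: "x + quad_part x a *\<^sub>R central_unit \<in> Cx x"
proof -
  obtain z v X where x: "x = (z, v, X)" by (metis prod.exhaust)
  have "expad (0, a, 0) x + expad (0, - a, 0) x \<in> Cx x"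
    by (intro convex_cone_add[OF convex_cone_Cx] Inn_orbit_in_Cx translation_in_Inn)
  then have "(1/2) *\<^sub>R (expad (0, a, 0) x + expad (0, - a, 0) x) \<in> Cx x"
    by (rule convex_cone_scaleR[OF convex_cone_Cx, rotated]) simp
  moreover have "(1/2) *\<^sub>R (expad (0, a, 0) x + expad (0, - a, 0) x) = x + quad_part x a *\<^sub>R central_unit"
    by (simp add: x expad_translation central_unit_def quad_part_def omega_def
        matrix_vector_mult_uminus_right inner_minus_right)
  ultimately show ?thesis by simp
qed

lemma sgn_quad_part_central_in_Cx:
  assumes "quad_part x b \<noteq> 0"
  shows "sgn (quad_part x b) *\<^sub>R central_unit \<in> Cx x"
proof -
  define q where "q = quad_part x b"
  have "x + t *\<^sub>R (q *\<^sub>R central_unit) \<in> Cx x" if "t \<ge> 0" for t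
    using Cx_add_quad_part[of x "sqrt t *\<^sub>R b"] that by (simp add: quad_part_scale_arg q_def)
  then have "q *\<^sub>R central_unit \<in> Cx x"
    by (rule closed_convex_cone_recession[OF closed_Cx convex_cone_Cx])
  then have "inverse \<bar>q\<bar> *\<^sub>R (q *\<^sub>R central_unit) \<in> Cx x"
    by (rule convex_cone_scaleR[OF convex_cone_Cx, rotated]) simp
  moreover have "inverse \<bar>q\<bar> * q = sgn q" using assms by (simp add: q_def sgn_if abs_if)
  ultimately show ?thesis by (simp add: q_def)
qed

text \<open>A translation moves (z, v, 0) along the centre by \<omega>(a, v), in both directions.\<close>

lemma central_line_in_Cx:
  assumes "v \<noteq> 0"
  obtains c where "c \<noteq> 0" "c *\<^sub>R central_unit \<in> Cx (z, v, 0)" "- (c *\<^sub>R central_unit) \<in> Cx (z, v, 0)"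
proof -
  define c where "c = v \<bullet> v"
  have "c \<noteq> 0" using assms by (simp add: c_def)
  have line: "(z, v, 0) + t *\<^sub>R (c *\<^sub>R central_unit) \<in> Cx (z, v, 0)" for t
  proof -
    have "expad (0, t *\<^sub>R (symJ *v v), 0) (z, v, 0) = (z, v, 0) + t *\<^sub>R (c *\<^sub>R central_unit)"
      using omega_symJ_self[of v] omega_skew[of "symJ *v v" v]
      by (simp add: expad_translation central_unit_def c_def omega_def matrix_vector_mult_scaleR
          matrix_vector_mult_uminus_right)
    then show ?thesis using Inn_orbit_in_Cx[OF translation_in_Inn, of "t *\<^sub>R (symJ *v v)" "(z, v, 0)"] by simp
  qed
  have "c *\<^sub>R central_unit \<in> Cx (z, v, 0)"
    by (rule closed_convex_cone_recession[OF closed_Cx convex_cone_Cx line])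
  moreover have "- (c *\<^sub>R central_unit) \<in> Cx (z, v, 0)"
    by (rule closed_convex_cone_recession[OF closed_Cx convex_cone_Cx, of "(z, v, 0)"])
      (use line[of "- _"] in simp)
  ultimately show ?thesis using \<open>c \<noteq> 0\<close> that by blast
qed

lemma pointed_Cx_quad_part_sign:
  fixes x :: "('n::finite) jac"
  assumes "x \<in> hsp" "pointed (Cx x)" "quad_part x b \<noteq> 0"
  shows "x \<in> quad_part_cone (sgn (quad_part x b))"
proof -
  define s where "s = sgn (quad_part x b)"
  have "0 \<le> s * quad_part x y" for y
  proof (rule ccontr)
    assume "\<not> 0 \<le> s * quad_part x y"
    then have "quad_part x y \<noteq> 0" and "sgn (quad_part x y) = - s"
      using assms(3) by (auto simp: s_def sgn_if mult_less_0_iff split: if_splits)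
    then have "- (s *\<^sub>R central_unit) \<in> Cx x" using sgn_quad_part_central_in_Cx[of x y] by simp
    then have "s *\<^sub>R (central_unit :: 'n jac) = 0"
      using pointed_convex_coneD[OF convex_cone_Cx assms(2) sgn_quad_part_central_in_Cx[OF assms(3)]]
      by (simp add: s_def)
    then show False using assms(3) by (simp add: s_def sgn_0_0 central_unit_nonzero)
  qed
  then show ?thesis using assms(1) by (simp add: quad_part_cone_def s_def)
qed

lemma pointed_Cx_quad_part_zero_central:
  assumes x: "x \<in> hsp" and p: "pointed (Cx x)" and Q: "\<And>y. quad_part x y = 0"
  obtains z where "x = z *\<^sub>R central_unit"
proof -
  obtain z v X where xe: "x = (z, v, X)" by (metis prod.exhaust)
  have X0: "X = 0" using quad_part_eq_0_imp[OF x Q] xe by simp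
  have "v = 0"
  proof (rule ccontr)
    assume "v \<noteq> 0"
    then obtain c where "c \<noteq> 0" "c *\<^sub>R central_unit \<in> Cx x" "- (c *\<^sub>R central_unit) \<in> Cx x"
      using central_line_in_Cx[of v z] xe X0 by blast
    then show False using pointed_convex_coneD[OF convex_cone_Cx p] central_unit_nonzero by fastforce
  qed
  then show ?thesis using xe X0 that[of z] by (simp add: central_unit_def)
qed

lemma Cx_opposite_hamiltonian_cone:
  fixes x :: "('n::finite) jac"
  assumes s: "\<bar>s\<bar> = 1" and x: "x \<in> quad_part_cone s"
    and central: "s *\<^sub>R central_unit \<in> Cx x" and p: "pointed (Cx x)"
    and c: "c \<in> Cx x" "- c \<in> hamiltonian_cone s"
  shows "c = 0"
proof -
  have cQ: "c \<in> quad_part_cone s" using Cx_subset_quad_part_cone[OF x] c(1) by blast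
  have "s * hamiltonian c y \<le> 0" for y
  proof -
    have "0 \<le> s * hamiltonian (- c) y" using c(2) by (simp add: hamiltonian_cone_def)
    then show ?thesis using hamiltonian_scaleR[of "-1" c y] by simp
  qed
  moreover have "c \<in> hsp" "\<And>y. 0 \<le> s * quad_part c y" using cQ by (auto simp: quad_part_cone_def)
  moreover have "s \<noteq> 0" using s by auto
  ultimately obtain z where c_central: "c = z *\<^sub>R central_unit" and sign: "s * z \<le> 0"
    using hamiltonian_opposite_sign_central by metis
  show "c = 0"
  proof (cases "z = 0")
    case False
    then have "inverse \<bar>z\<bar> * z = - s" using s sign by (auto simp: abs_if mult_le_0_iff split: if_splits)
    then have "inverse \<bar>z\<bar> *\<^sub>R c = - (s *\<^sub>R central_unit)" by (simp add: c_central)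
    moreover have "inverse \<bar>z\<bar> *\<^sub>R c \<in> Cx x"
      using convex_cone_scaleR[OF convex_cone_Cx _ c(1)] by simp
    ultimately have "s *\<^sub>R (central_unit :: 'n jac) = 0"
      using pointed_convex_coneD[OF convex_cone_Cx p central] by simp
    then show ?thesis using s by (simp add: central_unit_nonzero)
  qed (simp add: c_central)
qed

lemma invariant_pointed_generating_Cx_plus_hamiltonian_cone:
  fixes x :: "('n::finite) jac"
  assumes s: "\<bar>s\<bar> = 1" and x: "x \<in> hsp" "x \<in> quad_part_cone s"
    and central: "s *\<^sub>R central_unit \<in> Cx x" and p: "pointed (Cx x)"
  shows "invariant_pointed_generating_cone (Cx x + hamiltonian_cone s)"
  unfolding invariant_pointed_generating_cone_def
proof (intro conjI ballI)
  note cones = closed_Cx closed_hamiltonian_cone convex_cone_Cx convex_cone_hamiltonian_cone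
  have disj: "\<And>c. c \<in> Cx x \<Longrightarrow> - c \<in> hamiltonian_cone s \<Longrightarrow> c = 0"
    by (rule Cx_opposite_hamiltonian_cone[OF s x(2) central p])
  show sub: "Cx x + hamiltonian_cone s \<subseteq> hsp"
  proof
    fix w assume "w \<in> Cx x + hamiltonian_cone s"
    then obtain c d where w: "w = c + d" and "c \<in> Cx x" "d \<in> hamiltonian_cone s"
      by (metis set_plus_elim)
    then have "c \<in> hsp" "d \<in> hsp" using Cx_subset_hsp[OF x(1)] by (auto simp: hamiltonian_cone_def)
    then show "w \<in> hsp" unfolding w by (rule subspace_add[OF subspace_hsp])
  qed
  show "closed (Cx x + hamiltonian_cone s)"
    by (rule closed_set_plus_convex_cone[OF cones disj])
  show "convex_cone (Cx x + hamiltonian_cone s)"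
    by (rule convex_cone_set_plus[OF convex_cone_Cx convex_cone_hamiltonian_cone])
  have "s \<noteq> 0" using s by auto
  then show "pointed (Cx x + hamiltonian_cone s)"
    using pointed_convex_coneD[OF convex_cone_Cx p] hamiltonian_cone_opposite
    by (intro pointed_set_plus_convex_cone[OF cones _ _ disj]) auto
  have "hamiltonian_cone s \<subseteq> Cx x + hamiltonian_cone s"
  proof
    fix d :: "'n jac" assume "d \<in> hamiltonian_cone s"
    then show "d \<in> Cx x + hamiltonian_cone s"
      using set_plus_intro[OF convex_cone_contains_0[OF convex_cone_Cx]] by (metis add_0)
  qed
  then have "hsp \<subseteq> span (Cx x + hamiltonian_cone s)"
    using span_mono span_hamiltonian_cone[OF s] by blast
  then show "span (Cx x + hamiltonian_cone s) = hsp"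
    using span_minimal[OF sub subspace_hsp] by (rule antisym[rotated])
  show "\<phi> ` (Cx x + hamiltonian_cone s) \<subseteq> Cx x + hamiltonian_cone s" if \<phi>: "\<phi> \<in> Inn" for \<phi>
  proof
    fix w assume "w \<in> \<phi> ` (Cx x + hamiltonian_cone s)"
    then obtain c d where w: "w = \<phi> (c + d)" and c: "c \<in> Cx x" and d: "d \<in> hamiltonian_cone s"
      by (auto elim!: set_plus_elim)
    have "\<phi> c \<in> Cx x" using Inn_Cx[OF \<phi>, of x] c by blast
    moreover have "\<phi> d \<in> hamiltonian_cone s" by (rule Inn_hamiltonian_cone[OF \<phi> d])
    ultimately
    show "w \<in> Cx x + hamiltonian_cone s"
      unfolding w linear_add[OF linear_Inn[OF \<phi>]] by (rule set_plus_intro)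
  qed
qed

theorem proposition3p25:
  fixes x :: "('n::finite) jac"
  assumes "x \<in> hsp"
    and "pointed (Cx x)"
  shows "\<exists>W. W \<subseteq> hsp \<and> x \<in> W \<and> closed W \<and> convex_cone W \<and> pointed W
            \<and> span W = hsp \<and> (\<forall>\<phi>\<in>(Inn :: ('n jac \<Rightarrow> 'n jac) set). \<phi> ` W \<subseteq> W)"
proof -
  have "\<exists>W. invariant_pointed_generating_cone W \<and> x \<in> W"
  proof (cases "\<exists>b. quad_part x b \<noteq> 0")
    case True
    then obtain b where b: "quad_part x b \<noteq> 0" by blast
    define s where "s = sgn (quad_part x b)"
    have s: "\<bar>s\<bar> = 1" using b by (simp add: s_def abs_sgn)
    have "x \<in> quad_part_cone s" using pointed_Cx_quad_part_sign[OF assms b] by (simp add: s_def)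
    moreover have "s *\<^sub>R central_unit \<in> Cx x" using sgn_quad_part_central_in_Cx[OF b] by (simp add: s_def)
    moreover have "x \<in> Cx x + hamiltonian_cone s"
      using set_plus_intro[OF Cx_self convex_cone_contains_0[OF convex_cone_hamiltonian_cone]] by simp
    ultimately show ?thesis
      using invariant_pointed_generating_Cx_plus_hamiltonian_cone[OF s assms(1) _ _ assms(2)] by blast
  next
    case False
    then obtain z where central: "x = z *\<^sub>R central_unit"
      using pointed_Cx_quad_part_zero_central[OF assms] by blast
    define s :: real where "s = (if z \<ge> 0 then 1 else -1)"
    have "x \<in> hamiltonian_cone s"
      using assms(1) by (simp add: central hamiltonian_cone_def hamiltonian_scaleR hamiltonian_central_unit s_def)
    moreover have "\<bar>s\<bar> = 1" by (simp add: s_def)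
    ultimately show ?thesis using invariant_pointed_generating_hamiltonian_cone by blast
  qed
  then show ?thesis unfolding invariant_pointed_generating_cone_def by blast
qed

end
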